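(* Let $X$ be a real Banach space with $\dim X\ge 2$. Then $X$ is a Hilbert space (i.e. its norm is induced by an inner product) if and only if $S_P(X)=0$.
   Context: For a real Banach space $X$ with unit sphere $S_X$, the P-angle constant is $S_P(X)=\sup\left\{\frac{\|x+y\|^2+\|x-y\|^2-4}{2\|x+y\|\,\|x-y\|}: x,y\in S_X,\ x\neq \pm y\right\}$ (this is the supremum of $\cos\operatorname{ang}_P(x+y,x-y)$, where $\operatorname{ang}_P(u,v)=\arccos\frac{\|u\|^2+\|v\|^2-\|u-v\|^2}{2\|u\|\|v\|}$). *)

theory Defs
  imports "HOL-Analysis.Analysis"
begin

definition P_angle_constant :: "'a::real_normed_vector itself \<Rightarrow> real" where
  "P_angle_constant _ = Sup {(norm (x + y)^2 + norm (x - y)^2 - 4) / (2 * norm (x + y) * norm (x - y)) | x y :: 'a.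
      norm x = 1 \<and> norm y = 1 \<and> x \<noteq> y \<and> x \<noteq> - y}"

definition norm_from_inner_product :: "'a::real_normed_vector itself \<Rightarrow> bool" where
  "norm_from_inner_product _ \<longleftrightarrow> (\<exists>ip :: 'a \<Rightarrow> 'a \<Rightarrow> real.
      (\<forall>x y. ip x y = ip y x) \<and>
      (\<forall>x y z. ip (x + y) z = ip x z + ip y z) \<and>
      (\<forall>r x y. ip (r *\<^sub>R x) y = r * ip x y) \<and>
      (\<forall>x. 0 \<le> ip x x) \<and>
      (\<forall>x. norm x = sqrt (ip x x)))"

end

theory Submission
  imports Defs
begin

text \<open>
  By the Jordan-von Neumann theorem a norm comes from an inner product iff it satisfies the
  parallelogram law, the inner product being given by polarization. Since
  \<open>S\<^sub>P(X) = 0\<close> says exactly that \<open>\<parallel>x + y\<parallel>\<^sup>2 + \<parallel>x - y\<parallel>\<^sup>2 \<le> 4\<close> on the unit sphere, the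
  theorem reduces to Day's theorem: this one-sided inequality, equivalently the parallelogram
  inequality for vectors of equal norm, already implies the parallelogram law.

  It suffices to prove Day's theorem in the plane spanned by two vectors, where the squared norm
  becomes a function \<open>N\<close> on \<open>\<real>\<^sup>2\<close>. Among the quadratic forms \<open>Q \<le> N\<close> (ellipses containing the
  unit ball) take one of maximal determinant. If \<open>N\<close> touched \<open>Q\<close> only along one line, a rank-one
  perturbation of \<open>Q\<close> would increase the determinant; so there are two independent contact
  points. The parallelogram inequality makes the contact points of equal \<open>Q\<close>-length closed under
  sums and differences, so on the \<open>Q\<close>-unit circle they contain all dyadic angles and hence, by
  continuity, everything: \<open>N = Q\<close>.
\<close>

section \<open>The Jordan-von Neumann theorem\<close>

lemma additive_real_fun_linear:
  fixes f :: "real \<Rightarrow> real"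
  assumes additive: "\<And>a b. f (a + b) = f a + f b"
    and bounded: "\<And>r. \<bar>f r\<bar> \<le> C * \<bar>r\<bar>"
  shows "f r = r * f 1"
proof -
  define g where "g s = f s - s * f 1" for s
  have g_add: "g (a + b) = g a + g b" for a b
    unfolding g_def using additive[of a b] by (simp add: algebra_simps)
  have g_minus: "g (- a) = - g a" for a
    using g_add[of a "- a"] g_add[of 0 0] by simp
  have g_nat: "g (real n * s) = real n * g s" for n s
    by (induction n) (use g_add[of 0 0] in \<open>simp_all add: g_add algebra_simps\<close>)
  have g_int: "g (of_int k) = 0" for k
    using g_nat[of "nat \<bar>k\<bar>" 1] g_minus[of "of_nat (nat \<bar>k\<bar>)"]
    by (cases "k \<ge> 0") (simp_all add: g_def)
  define D where "D = C + \<bar>f 1\<bar>"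
  have g_bounded: "\<bar>g s\<bar> \<le> D * \<bar>s\<bar>" for s
    using bounded[of s] abs_triangle_ineq4[of "f s" "s * f 1"] unfolding g_def D_def
    by (simp add: abs_mult algebra_simps)
  have "real n * \<bar>g r\<bar> \<le> D" for n
  proof -
    define t where "t = real n * r"
    have "g t = g (t - of_int \<lfloor>t\<rfloor>)"
      using g_add[of "t - of_int \<lfloor>t\<rfloor>" "of_int \<lfloor>t\<rfloor>"] g_int by simp
    moreover have "\<bar>t - of_int \<lfloor>t\<rfloor>\<bar> \<le> 1" by linarith
    moreover have "0 \<le> D" using bounded[of 1] unfolding D_def by simp
    ultimately have "\<bar>g t\<bar> \<le> D"
      using g_bounded[of "t - of_int \<lfloor>t\<rfloor>"] mult_left_le[of _ D] by fastforce
    then show ?thesis unfolding t_def g_nat by (simp add: abs_mult)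
  qed
  then have "g r = 0"
    by (metis reals_Archimedean3 zero_less_abs_iff not_less)
  then show ?thesis unfolding g_def by simp
qed

definition polarization :: "'a::real_normed_vector \<Rightarrow> 'a \<Rightarrow> real" where
  "polarization x y = ((norm (x + y))\<^sup>2 - (norm (x - y))\<^sup>2) / 4"

lemma polarization_commute: "polarization x y = polarization y x"
  unfolding polarization_def by (simp add: add.commute norm_minus_commute)

lemma polarization_self: "polarization x x = (norm x)\<^sup>2"
  unfolding polarization_def by (simp add: power_mult_distrib flip: scaleR_2)

lemma polarization_zero_left [simp]: "polarization 0 y = 0"
  unfolding polarization_def by simp

lemma abs_polarization_le: "\<bar>polarization x y\<bar> \<le> norm y * (norm x + norm y)"
proof -
  have "\<bar>norm (x + y) - norm (x - y)\<bar> \<le> norm ((x + y) - (x - y))"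
    by (rule norm_triangle_ineq3)
  also have "(x + y) - (x - y) = 2 *\<^sub>R y" by (simp flip: scaleR_2)
  finally have diff: "\<bar>norm (x + y) - norm (x - y)\<bar> \<le> 2 * norm y" by simp
  have sum: "norm (x + y) + norm (x - y) \<le> 2 * (norm x + norm y)"
    using norm_triangle_ineq[of x y] norm_triangle_ineq4[of x y] by simp
  have "\<bar>(norm (x + y))\<^sup>2 - (norm (x - y))\<^sup>2\<bar>
      = \<bar>norm (x + y) - norm (x - y)\<bar> * (norm (x + y) + norm (x - y))"
    by (simp add: power2_eq_square square_diff_square_factored abs_mult)
  also have "\<dots> \<le> (2 * norm y) * (2 * (norm x + norm y))"
    using diff sum by (intro mult_mono) simp_all
  finally show ?thesis unfolding polarization_def by (simp add: algebra_simps)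
qed

context
  assumes parallelogram:
    "\<And>x y :: 'a::real_normed_vector. (norm (x + y))\<^sup>2 + (norm (x - y))\<^sup>2 = 2 * (norm x)\<^sup>2 + 2 * (norm y)\<^sup>2"
begin

lemma polarization_add_left: "polarization (x + y) z = polarization x z + polarization (y::'a) z"
proof -
  have midpoint: "polarization (a + b) z + polarization (a - b) z = 2 * polarization a z" for a b :: 'a
  proof -
    have "a + b + z = (a + z) + b" "a + b - z = (a - z) + b"
      "a - b + z = (a + z) - b" "a - b - z = (a - z) - b" by (simp_all add: algebra_simps)
    then show ?thesis
      using parallelogram[of "a + z" b] parallelogram[of "a - z" b]
      unfolding polarization_def by (simp add: field_simps)
  qed
  define a where "a = (1/2) *\<^sub>R (x + y)"
  define b where "b = (1/2) *\<^sub>R (x - y)"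
  have "a + b = x" "a - b = y" "a + a = x + y"
    unfolding a_def b_def by (simp_all add: algebra_simps flip: scaleR_2)
  then show ?thesis using midpoint[of a b] midpoint[of a a] by simp
qed

lemma polarization_scaleR_left: "polarization (r *\<^sub>R x) y = r * polarization (x::'a) y"
proof -
  have scaleR_nat: "polarization (real n *\<^sub>R x) y = real n * polarization x y" for n x
    by (induction n) (simp_all add: polarization_add_left algebra_simps)
  have Cauchy_Schwarz: "\<bar>polarization x y\<bar> \<le> norm x * norm y" for x
  proof -
    have "real n * \<bar>polarization x y\<bar> \<le> real n * (norm x * norm y) + (norm y)\<^sup>2" for n
      using abs_polarization_le[of "real n *\<^sub>R x" y]
      by (simp add: scaleR_nat abs_mult power2_eq_square algebra_simps)
    then have "real n * (\<bar>polarization x y\<bar> - norm x * norm y) \<le> (norm y)\<^sup>2" for n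
      by (simp add: algebra_simps)
    then show ?thesis
      by (metis reals_Archimedean3 diff_gt_0_iff_gt not_less)
  qed
  show ?thesis
  proof (rule additive_real_fun_linear[of "\<lambda>r. polarization (r *\<^sub>R x) y", simplified])
    show "polarization ((a + b) *\<^sub>R x) y = polarization (a *\<^sub>R x) y + polarization (b *\<^sub>R x) y" for a b
      by (simp add: scaleR_add_left polarization_add_left)
    show "\<bar>polarization (r *\<^sub>R x) y\<bar> \<le> norm x * norm y * \<bar>r\<bar>" for r
      using Cauchy_Schwarz[of "r *\<^sub>R x"] by (simp add: algebra_simps)
  qed
qed

lemma norm_from_inner_product_if_parallelogram: "norm_from_inner_product (X :: 'a itself)"
  unfolding norm_from_inner_product_def
  by (intro exI[of _ polarization])
    (auto simp: polarization_self polarization_add_left polarization_scaleR_left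
      intro: polarization_commute)

end

lemma parallelogram_law_if_norm_from_inner_product:
  fixes X :: "'a::real_normed_vector itself" and x y :: 'a
  assumes "norm_from_inner_product X"
  shows "(norm (x + y))\<^sup>2 + (norm (x - y))\<^sup>2 = 2 * (norm x)\<^sup>2 + 2 * (norm y)\<^sup>2"
proof -
  obtain ip :: "'a \<Rightarrow> 'a \<Rightarrow> real" where ip: "\<forall>x y. ip x y = ip y x" "\<forall>x y z. ip (x + y) z = ip x z + ip y z"
    "\<forall>r x y. ip (r *\<^sub>R x) y = r * ip x y" "\<forall>x. 0 \<le> ip x x" "\<forall>x. norm x = sqrt (ip x x)"
    using assms unfolding norm_from_inner_product_def by blast
  have norm: "(norm z)\<^sup>2 = ip z z" for z using ip(4,5) by simp
  have add: "ip (u + v) z = ip u z + ip v z" "ip z (u + v) = ip z u + ip z v" for u v z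
    using ip(1,2) by metis+
  have diff: "ip (u - v) z = ip u z - ip v z" "ip z (u - v) = ip z u - ip z v" for u v z
    using add[of u "- v" z] ip(1,3) by (metis diff_conv_add_uminus mult_minus1 scaleR_minus1_left)+
  show ?thesis
    unfolding norm add diff using ip(1) by (simp add: algebra_simps)
qed

section \<open>Quadratic forms on the plane\<close>

definition bilin_form :: "real \<Rightarrow> real \<Rightarrow> real \<Rightarrow> real \<times> real \<Rightarrow> real \<times> real \<Rightarrow> real" where
  "bilin_form \<alpha> \<beta> \<gamma> z w = \<alpha> * fst z * fst w + \<gamma> * (fst z * snd w + snd z * fst w) + \<beta> * snd z * snd w"

definition quad_form :: "real \<Rightarrow> real \<Rightarrow> real \<Rightarrow> real \<times> real \<Rightarrow> real" where
  "quad_form \<alpha> \<beta> \<gamma> z = bilin_form \<alpha> \<beta> \<gamma> z z"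

definition det2 :: "real \<times> real \<Rightarrow> real \<times> real \<Rightarrow> real" where
  "det2 z w = fst z * snd w - snd z * fst w"

lemma bilin_form_scaleR_right: "bilin_form \<alpha> \<beta> \<gamma> z (t *\<^sub>R w) = t * bilin_form \<alpha> \<beta> \<gamma> z w"
  unfolding bilin_form_def by (simp add: algebra_simps)

lemma bilin_form_scaleR_left: "bilin_form \<alpha> \<beta> \<gamma> (t *\<^sub>R z) w = t * bilin_form \<alpha> \<beta> \<gamma> z w"
  unfolding bilin_form_def by (simp add: algebra_simps)

lemma quad_form_scaleR [simp]: "quad_form \<alpha> \<beta> \<gamma> (t *\<^sub>R z) = t\<^sup>2 * quad_form \<alpha> \<beta> \<gamma> z"
  unfolding quad_form_def bilin_form_def by (simp add: power2_eq_square algebra_simps)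

lemma quad_form_add:
  "quad_form \<alpha> \<beta> \<gamma> (z + w) = quad_form \<alpha> \<beta> \<gamma> z + 2 * bilin_form \<alpha> \<beta> \<gamma> z w + quad_form \<alpha> \<beta> \<gamma> w"
  unfolding quad_form_def bilin_form_def by (simp add: algebra_simps)

lemma quad_form_parallelogram:
  "quad_form \<alpha> \<beta> \<gamma> (z + w) + quad_form \<alpha> \<beta> \<gamma> (z - w) = 2 * quad_form \<alpha> \<beta> \<gamma> z + 2 * quad_form \<alpha> \<beta> \<gamma> w"
  unfolding quad_form_def bilin_form_def by (simp add: algebra_simps)

lemma bilin_form_add_diff:
  "bilin_form \<alpha> \<beta> \<gamma> (z + w) (z - w) = quad_form \<alpha> \<beta> \<gamma> z - quad_form \<alpha> \<beta> \<gamma> w"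
  unfolding quad_form_def bilin_form_def by (simp add: algebra_simps)

lemma Lagrange_identity_quad_form:
  "quad_form \<alpha> \<beta> \<gamma> z * quad_form \<alpha> \<beta> \<gamma> w - (bilin_form \<alpha> \<beta> \<gamma> z w)\<^sup>2
    = (\<alpha> * \<beta> - \<gamma>\<^sup>2) * (det2 z w)\<^sup>2"
  unfolding quad_form_def bilin_form_def det2_def by (simp add: power2_eq_square algebra_simps)

lemma bilin_form_square_le:
  assumes "0 \<le> \<alpha> * \<beta> - \<gamma>\<^sup>2"
  shows "(bilin_form \<alpha> \<beta> \<gamma> z w)\<^sup>2 \<le> quad_form \<alpha> \<beta> \<gamma> z * quad_form \<alpha> \<beta> \<gamma> w"
proof -
  have "0 \<le> (\<alpha> * \<beta> - \<gamma>\<^sup>2) * (det2 z w)\<^sup>2" using assms by simp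
  then show ?thesis using Lagrange_identity_quad_form[of \<alpha> \<beta> \<gamma> z w] by linarith
qed

lemma quad_form_pos:
  assumes "0 \<le> \<alpha>" "0 < \<alpha> * \<beta> - \<gamma>\<^sup>2" "z \<noteq> 0"
  shows "0 < quad_form \<alpha> \<beta> \<gamma> z"
proof -
  have "0 < \<alpha>" using assms(1,2) by (smt (verit) mult_eq_0_iff zero_le_power2)
  moreover have "\<alpha> * quad_form \<alpha> \<beta> \<gamma> z = (\<alpha> * fst z + \<gamma> * snd z)\<^sup>2 + (\<alpha> * \<beta> - \<gamma>\<^sup>2) * (snd z)\<^sup>2"
    unfolding quad_form_def bilin_form_def by (simp add: power2_eq_square algebra_simps)
  moreover have "0 < (\<alpha> * fst z + \<gamma> * snd z)\<^sup>2 + (\<alpha> * \<beta> - \<gamma>\<^sup>2) * (snd z)\<^sup>2"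
  proof (cases "snd z = 0")
    case True
    then have "fst z \<noteq> 0" using assms(3) by (simp add: prod_eq_iff)
    then show ?thesis using True \<open>0 < \<alpha>\<close> by simp
  next
    case False
    then show ?thesis using assms(2) by (simp add: add_nonneg_pos)
  qed
  ultimately show ?thesis by (metis zero_less_mult_pos)
qed

text \<open>With \<open>M\<close> the Gram matrix of the form, \<open>(m1, m2) = M w\<close>; the second identity is the matrix
  determinant lemma for \<open>s M - c (M w) (M w)\<^sup>T\<close>.\<close>
lemma quad_form_rank_one_update:
  fixes \<alpha> \<beta> \<gamma> s c :: real and w :: "real \<times> real"
  defines "m1 \<equiv> \<alpha> * fst w + \<gamma> * snd w" and "m2 \<equiv> \<gamma> * fst w + \<beta> * snd w"
  shows "quad_form (s * \<alpha> - c * m1\<^sup>2) (s * \<beta> - c * m2\<^sup>2) (s * \<gamma> - c * m1 * m2) z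
      = s * quad_form \<alpha> \<beta> \<gamma> z - c * (bilin_form \<alpha> \<beta> \<gamma> z w)\<^sup>2"
    and "(s * \<alpha> - c * m1\<^sup>2) * (s * \<beta> - c * m2\<^sup>2) - (s * \<gamma> - c * m1 * m2)\<^sup>2
      = s * (s - c * quad_form \<alpha> \<beta> \<gamma> w) * (\<alpha> * \<beta> - \<gamma>\<^sup>2)"
  unfolding quad_form_def bilin_form_def m1_def m2_def by (simp_all add: power2_eq_square algebra_simps)

lemma continuous_on_bilin_form [continuous_intros]:
  "continuous_on S f \<Longrightarrow> continuous_on S g \<Longrightarrow> continuous_on S (\<lambda>x. bilin_form \<alpha> \<beta> \<gamma> (f x) (g x))"
  unfolding bilin_form_def by (intro continuous_intros)

lemma continuous_on_quad_form [continuous_intros]: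
  "continuous_on S f \<Longrightarrow> continuous_on S (\<lambda>x. quad_form \<alpha> \<beta> \<gamma> (f x))"
  unfolding quad_form_def by (intro continuous_intros)

lemma det2_scaleR_left [simp]: "det2 (s *\<^sub>R z) w = s * det2 z w"
  unfolding det2_def by (simp add: algebra_simps)

lemma det2_scaleR_right [simp]: "det2 z (t *\<^sub>R w) = t * det2 z w"
  unfolding det2_def by (simp add: algebra_simps)

lemma det2_add_diff: "det2 (z + w) (z - w) = - 2 * det2 z w"
  unfolding det2_def by (simp add: algebra_simps)

lemma det2_zero_left [simp]: "det2 0 w = 0"
  unfolding det2_def by simp

lemma det2_zero_right [simp]: "det2 z 0 = 0"
  unfolding det2_def by simp

lemma Cramer_decomposition:
  assumes "det2 u v \<noteq> 0"
  shows "z = (det2 z v / det2 u v) *\<^sub>R u + (det2 u z / det2 u v) *\<^sub>R v"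
proof -
  have "det2 u v *\<^sub>R z = det2 z v *\<^sub>R u + det2 u z *\<^sub>R v"
    unfolding det2_def by (simp add: prod_eq_iff algebra_simps)
  then have "z = (1 / det2 u v) *\<^sub>R (det2 z v *\<^sub>R u + det2 u z *\<^sub>R v)"
    using assms by (metis divide_self_if scaleR_one scaleR_scaleR times_divide_eq_left mult_1)
  then show ?thesis by (simp add: scaleR_right_distrib)
qed

lemma polar_decomposition:
  fixes z :: "real \<times> real"
  obtains r t where "0 \<le> r" "z = r *\<^sub>R (cos t, sin t)"
proof -
  define r where "r = norm z"
  show ?thesis
  proof (cases "z = 0")
    case True
    then show ?thesis using that[of 0 0] by (simp add: zero_prod_def)
  next
    case False
    then have "r > 0" unfolding r_def by simp
    have "(fst z / r)\<^sup>2 + (snd z / r)\<^sup>2 = r\<^sup>2 / r\<^sup>2"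
      unfolding r_def by (simp add: norm_prod_def power_divide flip: add_divide_distrib)
    then have "(fst z / r)\<^sup>2 + (snd z / r)\<^sup>2 = 1"
      using \<open>r > 0\<close> by simp
    then obtain t where "fst z / r = cos t" "snd z / r = sin t"
      by (rule sincos_total_2pi)
    then show ?thesis using that[of r t] \<open>r > 0\<close> by (cases z) (simp add: field_simps)
  qed
qed

section \<open>Day's theorem\<close>

lemma closure_int_dyadics: "closure (\<Union>k. \<Union>m. {of_int m / 2 ^ k :: real}) = UNIV"
proof -
  have "(\<Union>k. \<Union>f \<in> Basis \<rightarrow> \<int>. {\<Sum>i\<in>Basis. (f i / 2 ^ k) *\<^sub>R i :: real}) \<subseteq> (\<Union>k. \<Union>m. {of_int m / 2 ^ k})"
  proof clarify
    fix k and f :: "real \<Rightarrow> real" assume "f \<in> Basis \<rightarrow> \<int>"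
    then obtain m where "f 1 = of_int m" by (auto simp: Basis_real_def elim: Ints_cases)
    then have "(\<Sum>i\<in>Basis. (f i / 2 ^ k) *\<^sub>R i) = of_int m / 2 ^ k" by (simp add: Basis_real_def)
    then show "(\<Sum>i\<in>Basis. (f i / 2 ^ k) *\<^sub>R i) \<in> (\<Union>k. \<Union>m. {of_int m / 2 ^ k})" by blast
  qed
  then have "closure (\<Union>k. \<Union>f \<in> Basis \<rightarrow> \<int>. {\<Sum>i\<in>Basis. (f i / 2 ^ k) *\<^sub>R i :: real})
      \<subseteq> closure (\<Union>k. \<Union>m. {of_int m / 2 ^ k})"
    by (rule closure_mono)
  then show ?thesis unfolding closure_dyadic_rationals by blast
qed

lemma cos_half_gt_zero: "\<bar>x\<bar> \<le> pi / 2 \<Longrightarrow> 0 < cos (x / 2)"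
  by (smt (verit) cos_gt_zero_pi pi_gt_zero field_sum_of_halves)

lemma int_multiples_mem_if_periodic:
  fixes S :: "real set"
  assumes "0 \<in> S" "d \<in> S" and periodic: "\<And>a. a + 2 * d \<in> S \<longleftrightarrow> a \<in> S"
  shows "of_int k * d \<in> S"
proof -
  have "of_int k * d \<in> S \<and> of_int (k + 1) * d \<in> S"
  proof (induction k rule: int_induct[where k = 0])
    case base
    show ?case using assms(1,2) by simp
  next
    case (step1 i)
    have "of_int i * d + 2 * d = of_int (i + 1 + 1) * d" by (simp add: algebra_simps)
    then show ?case using step1 periodic by metis
  next
    case (step2 i)
    have "of_int (i - 1) * d + 2 * d = of_int (i + 1) * d" by (simp add: algebra_simps)
    then show ?case using step2 periodic by (metis diff_add_cancel)
  qed
  then show ?thesis ..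
qed

lemma dyadic_multiples_mem_if_midpoint_closed:
  fixes S :: "real set"
  assumes "0 < d" "\<And>k. of_int k * d \<in> S"
    and midpoint: "\<And>a b. a \<in> S \<Longrightarrow> b \<in> S \<Longrightarrow> \<bar>a - b\<bar> \<le> d \<Longrightarrow> (a + b) / 2 \<in> S"
  shows "of_int k * d / 2 ^ n \<in> S"
proof (induction n arbitrary: k)
  case 0
  then show ?case using assms(2) by simp
next
  case (Suc n)
  obtain j where "k = 2 * j \<or> k = 2 * j + 1" by (metis oddE evenE)
  then show ?case
  proof
    assume "k = 2 * j"
    then show ?case using Suc.IH[of j] by (simp add: field_simps)
  next
    assume k: "k = 2 * j + 1"
    have diff: "of_int (j + 1) * d / 2 ^ n - of_int j * d / 2 ^ n = d / 2 ^ n"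
      by (simp add: field_simps)
    have "0 \<le> d / 2 ^ n" "d / 2 ^ n \<le> d" using \<open>0 < d\<close> by (simp_all add: divide_le_eq)
    then have "\<bar>of_int (j + 1) * d / 2 ^ n - of_int j * d / 2 ^ n\<bar> \<le> d"
      unfolding diff by simp
    from midpoint[OF Suc.IH Suc.IH this] show ?case
      unfolding k by (simp add: field_simps)
  qed
qed

lemma closed_periodic_midpoint_closed_eq_UNIV:
  fixes S :: "real set"
  assumes "closed S" "0 < d" "0 \<in> S" "d \<in> S"
    and periodic: "\<And>a. a + 2 * d \<in> S \<longleftrightarrow> a \<in> S"
    and midpoint: "\<And>a b. a \<in> S \<Longrightarrow> b \<in> S \<Longrightarrow> \<bar>a - b\<bar> \<le> d \<Longrightarrow> (a + b) / 2 \<in> S"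
  shows "S = UNIV"
proof -
  have "closed ((\<lambda>r. r * d) -` S)"
    using \<open>closed S\<close> by (intro continuous_closed_vimage) (auto intro: continuous_intros)
  moreover have "(\<Union>k. \<Union>m. {of_int m / 2 ^ k}) \<subseteq> (\<lambda>r. r * d) -` S"
    using dyadic_multiples_mem_if_midpoint_closed[OF \<open>0 < d\<close> int_multiples_mem_if_periodic[OF assms(3-5)] midpoint]
    by (auto simp: field_simps)
  ultimately have "r * d \<in> S" for r
    using closure_minimal closure_int_dyadics by blast
  then have "s \<in> S" for s using \<open>0 < d\<close> by (metis nonzero_eq_divide_eq less_irrefl)
  then show ?thesis by blast
qed

locale Day_plane =
  fixes N :: "real \<times> real \<Rightarrow> real"
  assumes continuous: "continuous_on UNIV N"
    and homogeneous: "\<And>t z. N (t *\<^sub>R z) = t\<^sup>2 * N z"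
    and positive: "\<And>z. z \<noteq> 0 \<Longrightarrow> 0 < N z"
    and parallelogram_le: "\<And>z w. N z = N w \<Longrightarrow> N (z + w) + N (z - w) \<le> 2 * N z + 2 * N w"
begin

lemma continuous_on_N [continuous_intros]: "continuous_on S f \<Longrightarrow> continuous_on S (\<lambda>x. N (f x))"
  using continuous_on_compose2[OF continuous] by blast

lemma N_eq_norm_sgn: "N z = (norm z)\<^sup>2 * N (sgn z)"
proof (cases "z = 0")
  case True
  then show ?thesis using homogeneous[of 0 z] by simp
next
  case False
  then have "z = norm z *\<^sub>R sgn z" by (simp add: sgn_div_norm)
  then show ?thesis by (metis homogeneous)
qed

lemma N_lower_bound:
  obtains c where "0 < c" "\<And>z. c * (norm z)\<^sup>2 \<le> N z"
proof -
  have "(1, 0) \<in> sphere (0 :: real \<times> real) 1" by simp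
  then obtain z0 where z0: "z0 \<in> sphere (0 :: real \<times> real) 1" and min: "\<And>z. z \<in> sphere 0 1 \<Longrightarrow> N z0 \<le> N z"
    using continuous_attains_inf[OF compact_sphere _ continuous_on_N[OF continuous_on_id]] by blast
  show ?thesis
  proof (rule that[of "N z0"])
    show "0 < N z0" using z0 by (intro positive) auto
    show "N z0 * (norm z)\<^sup>2 \<le> N z" for z
      using min[of "sgn z"] N_eq_norm_sgn[of z] by (cases "z = 0") (simp_all add: norm_sgn)
  qed
qed

text \<open>Geometrically, the ellipse \<open>{z. quad_form \<alpha> \<beta> \<gamma> z \<le> 1}\<close> contains the unit ball \<open>{z. N z \<le> 1}\<close>.\<close>
definition minorant :: "real \<Rightarrow> real \<Rightarrow> real \<Rightarrow> bool" where
  "minorant \<alpha> \<beta> \<gamma> \<longleftrightarrow> (\<forall>z. 0 \<le> quad_form \<alpha> \<beta> \<gamma> z \<and> quad_form \<alpha> \<beta> \<gamma> z \<le> N z)"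

lemma minorantD:
  assumes "minorant \<alpha> \<beta> \<gamma>"
  shows "0 \<le> quad_form \<alpha> \<beta> \<gamma> z" "quad_form \<alpha> \<beta> \<gamma> z \<le> N z"
  using assms unfolding minorant_def by blast+

lemma minorant_if_le_on_sphere:
  assumes "\<And>z. 0 \<le> quad_form \<alpha> \<beta> \<gamma> z" and "\<And>z. norm z = 1 \<Longrightarrow> quad_form \<alpha> \<beta> \<gamma> z \<le> N z"
  shows "minorant \<alpha> \<beta> \<gamma>"
proof -
  have "quad_form \<alpha> \<beta> \<gamma> z \<le> N z" for z
  proof (cases "z = 0")
    case True
    then show ?thesis using homogeneous[of 0 z] quad_form_scaleR[of \<alpha> \<beta> \<gamma> 0 z] by simp
  next
    case False
    then have "z = norm z *\<^sub>R sgn z" by (simp add: sgn_div_norm)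
    then have "quad_form \<alpha> \<beta> \<gamma> z = (norm z)\<^sup>2 * quad_form \<alpha> \<beta> \<gamma> (sgn z)"
      by (metis quad_form_scaleR)
    also have "\<dots> \<le> (norm z)\<^sup>2 * N (sgn z)" using assms(2)[of "sgn z"] False by (simp add: norm_sgn)
    finally show ?thesis by (simp add: N_eq_norm_sgn[of z])
  qed
  then show ?thesis unfolding minorant_def using assms(1) by blast
qed

text \<open>The only use of the parallelogram inequality.\<close>
lemma minorant_contact_closed:
  assumes "minorant \<alpha> \<beta> \<gamma>" and "N z = quad_form \<alpha> \<beta> \<gamma> z" "N w = quad_form \<alpha> \<beta> \<gamma> w"
    and "quad_form \<alpha> \<beta> \<gamma> z = quad_form \<alpha> \<beta> \<gamma> w"
  shows "N (z + w) = quad_form \<alpha> \<beta> \<gamma> (z + w)" "N (z - w) = quad_form \<alpha> \<beta> \<gamma> (z - w)"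
proof -
  have "N (z + w) + N (z - w) \<le> quad_form \<alpha> \<beta> \<gamma> (z + w) + quad_form \<alpha> \<beta> \<gamma> (z - w)"
    using parallelogram_le[of z w] assms(2-4) quad_form_parallelogram[of \<alpha> \<beta> \<gamma> z w] by simp
  moreover have "quad_form \<alpha> \<beta> \<gamma> (z + w) \<le> N (z + w)" "quad_form \<alpha> \<beta> \<gamma> (z - w) \<le> N (z - w)"
    using minorantD[OF assms(1)] by blast+
  ultimately show "N (z + w) = quad_form \<alpha> \<beta> \<gamma> (z + w)" "N (z - w) = quad_form \<alpha> \<beta> \<gamma> (z - w)"
    by linarith+
qed

lemma max_det_minorant:
  obtains \<alpha> \<beta> \<gamma> where "minorant \<alpha> \<beta> \<gamma>" "0 < \<alpha> * \<beta> - \<gamma>\<^sup>2"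
    "\<And>\<alpha>' \<beta>' \<gamma>'. minorant \<alpha>' \<beta>' \<gamma>' \<Longrightarrow> \<alpha>' * \<beta>' - \<gamma>'\<^sup>2 \<le> \<alpha> * \<beta> - \<gamma>\<^sup>2"
proof -
  define F where "F = {(\<alpha>, \<beta>, \<gamma>). minorant \<alpha> \<beta> \<gamma>}"
  define G where "G = (N (1, 0) + N (0, 1)) / 2"
  have "closed F"
    unfolding F_def minorant_def case_prod_unfold quad_form_def bilin_form_def
    by (intro closed_Collect_all closed_Collect_conj closed_Collect_le continuous_intros)
  moreover have "F \<subseteq> {0..N (1, 0)} \<times> {0..N (0, 1)} \<times> {-G..G}"
  proof
    fix p assume "p \<in> F"
    then obtain \<alpha> \<beta> \<gamma> where p: "p = (\<alpha>, \<beta>, \<gamma>)" and "minorant \<alpha> \<beta> \<gamma>"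
      unfolding F_def by auto
    note Q = minorantD[OF this(2)]
    show "p \<in> {0..N (1, 0)} \<times> {0..N (0, 1)} \<times> {-G..G}"
      using Q[of "(1, 0)"] Q[of "(0, 1)"] Q[of "(1, 1)"] Q[of "(1, -1)"]
      unfolding p G_def quad_form_def bilin_form_def by (auto simp: field_simps)
  qed
  then have "bounded F" by (rule bounded_subset[rotated]) (intro bounded_Times bounded_closed_interval)
  ultimately have "compact F" by (simp add: compact_eq_bounded_closed)
  obtain c where c: "0 < c" "\<And>z. c * (norm z)\<^sup>2 \<le> N z" using N_lower_bound by blast
  have "minorant c c 0"
    using c unfolding minorant_def quad_form_def bilin_form_def
    by (simp add: norm_prod_def power2_eq_square algebra_simps)
  then have "(c, c, 0) \<in> F" unfolding F_def by simp
  then have "\<exists>p\<in>F. \<forall>q\<in>F. fst q * fst (snd q) - (snd (snd q))\<^sup>2 \<le> fst p * fst (snd p) - (snd (snd p))\<^sup>2"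
    by (intro continuous_attains_sup[OF \<open>compact F\<close>]) (auto intro!: continuous_intros)
  then obtain p where "p \<in> F"
    and p: "\<And>q. q \<in> F \<Longrightarrow> fst q * fst (snd q) - (snd (snd q))\<^sup>2 \<le> fst p * fst (snd p) - (snd (snd p))\<^sup>2"
    by blast
  obtain \<alpha> \<beta> \<gamma> where "p = (\<alpha>, \<beta>, \<gamma>)" by (cases p)
  show ?thesis
  proof (rule that[of \<alpha> \<beta> \<gamma>])
    show "minorant \<alpha> \<beta> \<gamma>" using \<open>p \<in> F\<close> \<open>p = (\<alpha>, \<beta>, \<gamma>)\<close> unfolding F_def by simp
    show "0 < \<alpha> * \<beta> - \<gamma>\<^sup>2" using p[OF \<open>(c, c, 0) \<in> F\<close>] \<open>p = (\<alpha>, \<beta>, \<gamma>)\<close> c(1) by simp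
      (smt (verit) mult_pos_pos)
    show "\<alpha>' * \<beta>' - \<gamma>'\<^sup>2 \<le> \<alpha> * \<beta> - \<gamma>\<^sup>2" if "minorant \<alpha>' \<beta>' \<gamma>'" for \<alpha>' \<beta>' \<gamma>'
      using p[of "(\<alpha>', \<beta>', \<gamma>')"] that \<open>p = (\<alpha>, \<beta>, \<gamma>)\<close> unfolding F_def by simp
  qed
qed

lemma minorant_gap:
  assumes "minorant \<alpha> \<beta> \<gamma>" "0 < \<alpha> * \<beta> - \<gamma>\<^sup>2" "quad_form \<alpha> \<beta> \<gamma> w = 1"
    and contacts: "\<And>z. N z = quad_form \<alpha> \<beta> \<gamma> z \<Longrightarrow> det2 z w = 0"
  obtains \<mu> where "0 < \<mu>" "\<mu> \<le> 1"
    "\<And>z. norm z = 1 \<Longrightarrow> (bilin_form \<alpha> \<beta> \<gamma> z w)\<^sup>2 \<le> 3/4 * quad_form \<alpha> \<beta> \<gamma> z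
      \<Longrightarrow> (1 + \<mu>) * quad_form \<alpha> \<beta> \<gamma> z \<le> N z"
proof -
  define K where "K = sphere 0 1 \<inter> {z. (bilin_form \<alpha> \<beta> \<gamma> z w)\<^sup>2 \<le> 3/4 * quad_form \<alpha> \<beta> \<gamma> z}"
  have Q_pos: "0 < quad_form \<alpha> \<beta> \<gamma> z" if "z \<in> K" for z
    using that minorantD(1)[OF assms(1), of "(1, 0)"] assms(2)
    by (intro quad_form_pos) (auto simp: K_def quad_form_def bilin_form_def)
  have gap: "quad_form \<alpha> \<beta> \<gamma> z < N z" if "z \<in> K" for z
  proof (rule ccontr)
    assume "\<not> quad_form \<alpha> \<beta> \<gamma> z < N z"
    then have "N z = quad_form \<alpha> \<beta> \<gamma> z" using minorantD(2)[OF assms(1), of z] by simp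
    then have "(bilin_form \<alpha> \<beta> \<gamma> z w)\<^sup>2 = quad_form \<alpha> \<beta> \<gamma> z"
      using contacts Lagrange_identity_quad_form[of \<alpha> \<beta> \<gamma> z w] assms(3) by simp
    then show False using that Q_pos[OF that] unfolding K_def by simp
  qed
  obtain \<mu> where \<mu>: "0 < \<mu>" "\<mu> \<le> 1" "\<And>z. z \<in> K \<Longrightarrow> (1 + \<mu>) * quad_form \<alpha> \<beta> \<gamma> z \<le> N z"
  proof (cases "K = {}")
    case True
    then show ?thesis using that[of 1] by simp
  next
    case False
    have "compact K"
      unfolding K_def by (intro compact_Int_closed compact_sphere closed_Collect_le continuous_intros)
    moreover have "continuous_on K (\<lambda>z. N z / quad_form \<alpha> \<beta> \<gamma> z)"
      using Q_pos by (intro continuous_intros) force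
    ultimately obtain z0 where "z0 \<in> K"
      and z0: "\<And>z. z \<in> K \<Longrightarrow> N z0 / quad_form \<alpha> \<beta> \<gamma> z0 \<le> N z / quad_form \<alpha> \<beta> \<gamma> z"
      using continuous_attains_inf[OF _ False] by blast
    define \<mu> where "\<mu> = min (N z0 / quad_form \<alpha> \<beta> \<gamma> z0 - 1) 1"
    show ?thesis
    proof (rule that[of \<mu>])
      show "0 < \<mu>" "\<mu> \<le> 1" using gap[OF \<open>z0 \<in> K\<close>] Q_pos[OF \<open>z0 \<in> K\<close>] unfolding \<mu>_def by simp_all
      fix z assume "z \<in> K"
      have "\<mu> \<le> N z0 / quad_form \<alpha> \<beta> \<gamma> z0 - 1" unfolding \<mu>_def by simp
      then have "1 + \<mu> \<le> N z / quad_form \<alpha> \<beta> \<gamma> z" using z0[OF \<open>z \<in> K\<close>] by simp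
      then show "(1 + \<mu>) * quad_form \<alpha> \<beta> \<gamma> z \<le> N z" using Q_pos[OF \<open>z \<in> K\<close>] by (simp add: le_divide_eq)
    qed
  qed
  then show ?thesis using that unfolding K_def by simp
qed

text \<open>The factor \<open>17/12\<close> makes the new form drop to \<open>(1 - \<mu>/16) Q\<close> near the direction \<open>w\<close>,
  while its determinant still grows by the factor \<open>(1 + \<mu>) (1 - 5/12 \<mu>) > 1\<close>.\<close>
lemma minorant_rank_one_update:
  assumes "minorant \<alpha> \<beta> \<gamma>" "0 \<le> \<alpha> * \<beta> - \<gamma>\<^sup>2" "quad_form \<alpha> \<beta> \<gamma> w = 1" "0 < \<mu>" "\<mu> \<le> 1"
    and gap: "\<And>z. norm z = 1 \<Longrightarrow> (bilin_form \<alpha> \<beta> \<gamma> z w)\<^sup>2 \<le> 3/4 * quad_form \<alpha> \<beta> \<gamma> z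
      \<Longrightarrow> (1 + \<mu>) * quad_form \<alpha> \<beta> \<gamma> z \<le> N z"
    and update: "\<And>z. quad_form \<alpha>' \<beta>' \<gamma>' z
      = (1 + \<mu>) * quad_form \<alpha> \<beta> \<gamma> z - 17/12 * \<mu> * (bilin_form \<alpha> \<beta> \<gamma> z w)\<^sup>2"
  shows "minorant \<alpha>' \<beta>' \<gamma>'"
proof (rule minorant_if_le_on_sphere)
  fix z
  have Q: "0 \<le> quad_form \<alpha> \<beta> \<gamma> z" "quad_form \<alpha> \<beta> \<gamma> z \<le> N z"
    using minorantD[OF assms(1)] by blast+
  have "(bilin_form \<alpha> \<beta> \<gamma> z w)\<^sup>2 \<le> quad_form \<alpha> \<beta> \<gamma> z"
    using bilin_form_square_le[OF assms(2), of z w] assms(3) by simp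
  then have "(1 + \<mu>) * quad_form \<alpha> \<beta> \<gamma> z - 17/12 * \<mu> * quad_form \<alpha> \<beta> \<gamma> z \<le> quad_form \<alpha>' \<beta>' \<gamma>' z"
    unfolding update using \<open>0 < \<mu>\<close> by simp
  moreover have "0 \<le> (1 - 5/12 * \<mu>) * quad_form \<alpha> \<beta> \<gamma> z" using Q(1) \<open>\<mu> \<le> 1\<close> by simp
  ultimately show "0 \<le> quad_form \<alpha>' \<beta>' \<gamma>' z" by (simp add: algebra_simps)
  assume "norm z = 1"
  show "quad_form \<alpha>' \<beta>' \<gamma>' z \<le> N z"
  proof (cases "(bilin_form \<alpha> \<beta> \<gamma> z w)\<^sup>2 \<le> 3/4 * quad_form \<alpha> \<beta> \<gamma> z")
    case True
    have "quad_form \<alpha>' \<beta>' \<gamma>' z \<le> (1 + \<mu>) * quad_form \<alpha> \<beta> \<gamma> z"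
      unfolding update using \<open>0 < \<mu>\<close> by simp
    then show ?thesis using gap[OF \<open>norm z = 1\<close> True] by simp
  next
    case False
    then have "quad_form \<alpha>' \<beta>' \<gamma>' z \<le> (1 + \<mu>) * quad_form \<alpha> \<beta> \<gamma> z - 17/12 * \<mu> * (3/4 * quad_form \<alpha> \<beta> \<gamma> z)"
      unfolding update using \<open>0 < \<mu>\<close> by simp
    also have "\<dots> = (1 - \<mu> / 16) * quad_form \<alpha> \<beta> \<gamma> z" by (simp add: algebra_simps)
    also have "\<dots> \<le> quad_form \<alpha> \<beta> \<gamma> z"
      using mult_nonneg_nonneg[OF _ Q(1), of "\<mu> / 16"] \<open>0 < \<mu>\<close> by (simp add: algebra_simps)
    finally show ?thesis using Q(2) by simp
  qed
qed

lemma minorant_det_increase: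
  assumes "minorant \<alpha> \<beta> \<gamma>" "0 < \<alpha> * \<beta> - \<gamma>\<^sup>2" "quad_form \<alpha> \<beta> \<gamma> w = 1"
    and contacts: "\<And>z. N z = quad_form \<alpha> \<beta> \<gamma> z \<Longrightarrow> det2 z w = 0"
  obtains \<alpha>' \<beta>' \<gamma>' where "minorant \<alpha>' \<beta>' \<gamma>'" "\<alpha> * \<beta> - \<gamma>\<^sup>2 < \<alpha>' * \<beta>' - \<gamma>'\<^sup>2"
proof -
  obtain \<mu> where \<mu>: "0 < \<mu>" "\<mu> \<le> 1"
    "\<And>z. norm z = 1 \<Longrightarrow> (bilin_form \<alpha> \<beta> \<gamma> z w)\<^sup>2 \<le> 3/4 * quad_form \<alpha> \<beta> \<gamma> z
      \<Longrightarrow> (1 + \<mu>) * quad_form \<alpha> \<beta> \<gamma> z \<le> N z"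
    using minorant_gap[OF assms] by blast
  define m1 where "m1 = \<alpha> * fst w + \<gamma> * snd w"
  define m2 where "m2 = \<gamma> * fst w + \<beta> * snd w"
  define \<alpha>' where "\<alpha>' = (1 + \<mu>) * \<alpha> - 17/12 * \<mu> * m1\<^sup>2"
  define \<beta>' where "\<beta>' = (1 + \<mu>) * \<beta> - 17/12 * \<mu> * m2\<^sup>2"
  define \<gamma>' where "\<gamma>' = (1 + \<mu>) * \<gamma> - 17/12 * \<mu> * m1 * m2"
  have "minorant \<alpha>' \<beta>' \<gamma>'"
  proof (rule minorant_rank_one_update[OF assms(1) less_imp_le[OF assms(2)] assms(3) \<mu>])
    show "quad_form \<alpha>' \<beta>' \<gamma>' z
      = (1 + \<mu>) * quad_form \<alpha> \<beta> \<gamma> z - 17/12 * \<mu> * (bilin_form \<alpha> \<beta> \<gamma> z w)\<^sup>2" for z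
      unfolding \<alpha>'_def \<beta>'_def \<gamma>'_def m1_def m2_def by (rule quad_form_rank_one_update(1))
  qed
  moreover have "\<alpha>' * \<beta>' - \<gamma>'\<^sup>2 = (1 + \<mu>) * (1 - 5/12 * \<mu>) * (\<alpha> * \<beta> - \<gamma>\<^sup>2)"
  proof -
    have "1 + \<mu> - 17/12 * \<mu> * 1 = 1 - 5/12 * \<mu>" by simp
    then show ?thesis
      unfolding \<alpha>'_def \<beta>'_def \<gamma>'_def m1_def m2_def quad_form_rank_one_update(2) assms(3) by simp
  qed
  moreover have "1 < (1 + \<mu>) * (1 - 5/12 * \<mu>)"
  proof -
    have "(1 + \<mu>) * (1 - 5/12 * \<mu>) = 1 + \<mu> * (7 - 5 * \<mu>) / 12" by (simp add: field_simps)
    moreover have "0 < \<mu> * (7 - 5 * \<mu>) / 12" using \<mu>(1,2) by simp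
    ultimately show ?thesis by simp
  qed
  ultimately show ?thesis using assms(2) that by simp
qed

lemma max_minorant_two_contacts:
  assumes "minorant \<alpha> \<beta> \<gamma>" "0 < \<alpha> * \<beta> - \<gamma>\<^sup>2"
    and max: "\<And>\<alpha>' \<beta>' \<gamma>'. minorant \<alpha>' \<beta>' \<gamma>' \<Longrightarrow> \<alpha>' * \<beta>' - \<gamma>'\<^sup>2 \<le> \<alpha> * \<beta> - \<gamma>\<^sup>2"
  obtains p q where "N p = quad_form \<alpha> \<beta> \<gamma> p" "N q = quad_form \<alpha> \<beta> \<gamma> q" "det2 p q \<noteq> 0"
proof (rule ccontr)
  assume "\<not> thesis"
  then have parallel: "\<And>p q. N p = quad_form \<alpha> \<beta> \<gamma> p \<Longrightarrow> N q = quad_form \<alpha> \<beta> \<gamma> q \<Longrightarrow> det2 p q = 0"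
    using that by blast
  obtain e where "e \<noteq> 0" and e: "\<And>z. N z = quad_form \<alpha> \<beta> \<gamma> z \<Longrightarrow> det2 z e = 0"
  proof (cases "\<exists>p. p \<noteq> 0 \<and> N p = quad_form \<alpha> \<beta> \<gamma> p")
    case True
    then show ?thesis using that parallel by blast
  next
    case False
    then show ?thesis using that[of "(1, 0)"] by (metis det2_zero_left zero_neq_one prod.inject zero_prod_def)
  qed
  define w where "w = (1 / sqrt (quad_form \<alpha> \<beta> \<gamma> e)) *\<^sub>R e"
  have "0 < quad_form \<alpha> \<beta> \<gamma> e"
    using \<open>e \<noteq> 0\<close> assms(2) minorantD(1)[OF assms(1), of "(1, 0)"]
    by (intro quad_form_pos) (simp_all add: quad_form_def bilin_form_def)
  then have "quad_form \<alpha> \<beta> \<gamma> w = 1" unfolding w_def by (simp add: power_divide)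
  moreover have "det2 z w = 0" if "N z = quad_form \<alpha> \<beta> \<gamma> z" for z
    using e[OF that] unfolding w_def by simp
  ultimately obtain \<alpha>' \<beta>' \<gamma>' where "minorant \<alpha>' \<beta>' \<gamma>'" "\<alpha> * \<beta> - \<gamma>\<^sup>2 < \<alpha>' * \<beta>' - \<gamma>'\<^sup>2"
    using minorant_det_increase[OF assms(1,2)] by blast
  then show False using max by fastforce
qed

lemma contact_circle:
  assumes "minorant \<alpha> \<beta> \<gamma>"
    and "N u = quad_form \<alpha> \<beta> \<gamma> u" "N v = quad_form \<alpha> \<beta> \<gamma> v"
    and "quad_form \<alpha> \<beta> \<gamma> u = 1" "quad_form \<alpha> \<beta> \<gamma> v = 1" "bilin_form \<alpha> \<beta> \<gamma> u v = 0"
  shows "N (cos t *\<^sub>R u + sin t *\<^sub>R v) = quad_form \<alpha> \<beta> \<gamma> (cos t *\<^sub>R u + sin t *\<^sub>R v)"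
proof -
  define c where "c s = cos s *\<^sub>R u + sin s *\<^sub>R v" for s
  have Q_c: "quad_form \<alpha> \<beta> \<gamma> (c s) = 1" for s
    using assms(4-6) sin_cos_squared_add[of s] unfolding c_def
    by (simp add: quad_form_add bilin_form_scaleR_left bilin_form_scaleR_right)
  have "{s. N (c s) = 1} = UNIV"
  proof (rule closed_periodic_midpoint_closed_eq_UNIV)
    show "closed {s. N (c s) = 1}" unfolding c_def by (intro closed_Collect_eq continuous_intros)
    show "0 < pi / 2" by simp
    show "0 \<in> {s. N (c s) = 1}" "pi / 2 \<in> {s. N (c s) = 1}"
      using assms(2-5) unfolding c_def by simp_all
    show "a + 2 * (pi / 2) \<in> {s. N (c s) = 1} \<longleftrightarrow> a \<in> {s. N (c s) = 1}" for a
      using homogeneous[of "-1" "c a"] unfolding c_def by (simp add: algebra_simps)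
    show "(a + b) / 2 \<in> {s. N (c s) = 1}"
      if "a \<in> {s. N (c s) = 1}" "b \<in> {s. N (c s) = 1}" "\<bar>a - b\<bar> \<le> pi / 2" for a b
    proof -
      define r where "r = 2 * cos ((a - b) / 2)"
      have "r \<noteq> 0" unfolding r_def using cos_half_gt_zero[OF that(3)] by simp
      have "c a + c b = (cos a + cos b) *\<^sub>R u + (sin a + sin b) *\<^sub>R v"
        unfolding c_def by (simp add: scaleR_add_left)
      also have "\<dots> = r *\<^sub>R c ((a + b) / 2)"
        unfolding c_def r_def cos_plus_cos sin_plus_sin by (simp add: algebra_simps)
      finally have "c a + c b = r *\<^sub>R c ((a + b) / 2)" .
      moreover have "N (c a + c b) = quad_form \<alpha> \<beta> \<gamma> (c a + c b)"
        using that(1,2) Q_c by (intro minorant_contact_closed(1)[OF assms(1)]) simp_all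
      ultimately have "r\<^sup>2 * N (c ((a + b) / 2)) = r\<^sup>2 * quad_form \<alpha> \<beta> \<gamma> (c ((a + b) / 2))"
        by (simp add: homogeneous)
      then show ?thesis using \<open>r \<noteq> 0\<close> Q_c by simp
    qed
  qed
  then show ?thesis using Q_c[of t] unfolding c_def by auto
qed

lemma contact_normalize:
  assumes "N z = quad_form \<alpha> \<beta> \<gamma> z" "0 < quad_form \<alpha> \<beta> \<gamma> z"
  obtains s where "0 < s" "N (s *\<^sub>R z) = quad_form \<alpha> \<beta> \<gamma> (s *\<^sub>R z)" "quad_form \<alpha> \<beta> \<gamma> (s *\<^sub>R z) = 1"
  using assms that[of "1 / sqrt (quad_form \<alpha> \<beta> \<gamma> z)"] by (simp add: homogeneous power_divide)

lemma max_minorant_orthonormal_contacts: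
  assumes "minorant \<alpha> \<beta> \<gamma>" "0 < \<alpha> * \<beta> - \<gamma>\<^sup>2"
    and "\<And>\<alpha>' \<beta>' \<gamma>'. minorant \<alpha>' \<beta>' \<gamma>' \<Longrightarrow> \<alpha>' * \<beta>' - \<gamma>'\<^sup>2 \<le> \<alpha> * \<beta> - \<gamma>\<^sup>2"
  obtains u v where "N u = quad_form \<alpha> \<beta> \<gamma> u" "N v = quad_form \<alpha> \<beta> \<gamma> v"
    "quad_form \<alpha> \<beta> \<gamma> u = 1" "quad_form \<alpha> \<beta> \<gamma> v = 1" "bilin_form \<alpha> \<beta> \<gamma> u v = 0" "det2 u v \<noteq> 0"
proof -
  have Q_pos: "0 < quad_form \<alpha> \<beta> \<gamma> z" if "det2 z w \<noteq> 0 \<or> det2 w z \<noteq> 0" for z w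
    using that assms(2) minorantD(1)[OF assms(1), of "(1, 0)"]
    by (intro quad_form_pos) (auto simp: quad_form_def bilin_form_def)
  obtain p q where "N p = quad_form \<alpha> \<beta> \<gamma> p" "N q = quad_form \<alpha> \<beta> \<gamma> q" "det2 p q \<noteq> 0"
    using max_minorant_two_contacts[OF assms] .
  then obtain s t where "0 < s" "0 < t"
    and p: "N (s *\<^sub>R p) = quad_form \<alpha> \<beta> \<gamma> (s *\<^sub>R p)" "quad_form \<alpha> \<beta> \<gamma> (s *\<^sub>R p) = 1"
    and q: "N (t *\<^sub>R q) = quad_form \<alpha> \<beta> \<gamma> (t *\<^sub>R q)" "quad_form \<alpha> \<beta> \<gamma> (t *\<^sub>R q) = 1"
    using contact_normalize Q_pos by metis
  define u0 where "u0 = s *\<^sub>R p + t *\<^sub>R q"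
  define v0 where "v0 = s *\<^sub>R p - t *\<^sub>R q"
  have "det2 u0 v0 \<noteq> 0"
    unfolding u0_def v0_def det2_add_diff using \<open>0 < s\<close> \<open>0 < t\<close> \<open>det2 p q \<noteq> 0\<close> by simp
  moreover have "N u0 = quad_form \<alpha> \<beta> \<gamma> u0" "N v0 = quad_form \<alpha> \<beta> \<gamma> v0"
    unfolding u0_def v0_def using minorant_contact_closed[OF assms(1) p(1) q(1)] p(2) q(2) by simp_all
  ultimately obtain a b where "0 < a" "0 < b"
    and u: "N (a *\<^sub>R u0) = quad_form \<alpha> \<beta> \<gamma> (a *\<^sub>R u0)" "quad_form \<alpha> \<beta> \<gamma> (a *\<^sub>R u0) = 1"
    and v: "N (b *\<^sub>R v0) = quad_form \<alpha> \<beta> \<gamma> (b *\<^sub>R v0)" "quad_form \<alpha> \<beta> \<gamma> (b *\<^sub>R v0) = 1"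
    using contact_normalize Q_pos by metis
  show ?thesis
  proof (rule that[OF u(1) v(1) u(2) v(2)])
    show "bilin_form \<alpha> \<beta> \<gamma> (a *\<^sub>R u0) (b *\<^sub>R v0) = 0"
      unfolding u0_def v0_def bilin_form_scaleR_left bilin_form_scaleR_right bilin_form_add_diff
      using p(2) q(2) by simp
    show "det2 (a *\<^sub>R u0) (b *\<^sub>R v0) \<noteq> 0" using \<open>det2 u0 v0 \<noteq> 0\<close> \<open>0 < a\<close> \<open>0 < b\<close> by simp
  qed
qed

theorem quadratic:
  obtains \<alpha> \<beta> \<gamma> where "\<And>z. N z = quad_form \<alpha> \<beta> \<gamma> z"
proof -
  obtain \<alpha> \<beta> \<gamma> where max: "minorant \<alpha> \<beta> \<gamma>" "0 < \<alpha> * \<beta> - \<gamma>\<^sup>2"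
    "\<And>\<alpha>' \<beta>' \<gamma>'. minorant \<alpha>' \<beta>' \<gamma>' \<Longrightarrow> \<alpha>' * \<beta>' - \<gamma>'\<^sup>2 \<le> \<alpha> * \<beta> - \<gamma>\<^sup>2"
    using max_det_minorant by blast
  then obtain u v where uv: "N u = quad_form \<alpha> \<beta> \<gamma> u" "N v = quad_form \<alpha> \<beta> \<gamma> v"
    "quad_form \<alpha> \<beta> \<gamma> u = 1" "quad_form \<alpha> \<beta> \<gamma> v = 1" "bilin_form \<alpha> \<beta> \<gamma> u v = 0" "det2 u v \<noteq> 0"
    by (rule max_minorant_orthonormal_contacts)
  have "N z = quad_form \<alpha> \<beta> \<gamma> z" for z
  proof -
    obtain r t where "(det2 z v / det2 u v, det2 u z / det2 u v) = r *\<^sub>R (cos t, sin t)"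
      by (rule polar_decomposition)
    then have "z = r *\<^sub>R (cos t *\<^sub>R u + sin t *\<^sub>R v)"
      using Cramer_decomposition[OF uv(6), of z] by (simp add: scaleR_add_right)
    then show ?thesis using contact_circle[OF max(1) uv(1-5), of t] by (simp add: homogeneous)
  qed
  then show ?thesis by (rule that)
qed

corollary parallelogram: "N (z + w) + N (z - w) = 2 * N z + 2 * N w"
  using quadratic quad_form_parallelogram by metis

end

lemma parallelogram_law_collinear:
  fixes x :: "'a::real_normed_vector"
  shows "(norm (x + t *\<^sub>R x))\<^sup>2 + (norm (x - t *\<^sub>R x))\<^sup>2 = 2 * (norm x)\<^sup>2 + 2 * (norm (t *\<^sub>R x))\<^sup>2"
proof -
  have eq: "x + t *\<^sub>R x = (1 + t) *\<^sub>R x" "x - t *\<^sub>R x = (1 - t) *\<^sub>R x" by (simp_all add: algebra_simps)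
  show ?thesis unfolding eq norm_scaleR by (simp add: power_mult_distrib power2_abs power2_eq_square algebra_simps)
qed

lemma equal_norm_parallelogram_le_if_unit:
  fixes u v :: "'a::real_normed_vector"
  assumes unit: "\<And>x y :: 'a. norm x = 1 \<Longrightarrow> norm y = 1 \<Longrightarrow> (norm (x + y))\<^sup>2 + (norm (x - y))\<^sup>2 \<le> 4"
    and "norm u = norm v"
  shows "(norm (u + v))\<^sup>2 + (norm (u - v))\<^sup>2 \<le> 2 * (norm u)\<^sup>2 + 2 * (norm v)\<^sup>2"
proof (cases "u = 0")
  case True
  then show ?thesis using \<open>norm u = norm v\<close> by simp
next
  case False
  define n where "n = norm u"
  have "v \<noteq> 0" using False \<open>norm u = norm v\<close> by auto
  then have "u = n *\<^sub>R sgn u" "v = n *\<^sub>R sgn v"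
    using False \<open>norm u = norm v\<close> unfolding n_def by (simp_all add: sgn_div_norm)
  then have "u + v = n *\<^sub>R (sgn u + sgn v)" "u - v = n *\<^sub>R (sgn u - sgn v)"
    by (metis scaleR_right_distrib, metis scaleR_right_diff_distrib)
  moreover have "(norm (sgn u + sgn v))\<^sup>2 + (norm (sgn u - sgn v))\<^sup>2 \<le> 4"
    using unit False \<open>v \<noteq> 0\<close> by (simp add: norm_sgn)
  from mult_left_mono[OF this, of "n\<^sup>2"] have "n\<^sup>2 * (norm (sgn u + sgn v))\<^sup>2 + n\<^sup>2 * (norm (sgn u - sgn v))\<^sup>2 \<le> 4 * n\<^sup>2"
    by (simp add: algebra_simps)
  ultimately show ?thesis
    using \<open>norm u = norm v\<close> unfolding n_def by (simp add: power_mult_distrib)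
qed

lemma scaleR_add_scaleR_eq_0_imp:
  fixes x y :: "'a::real_normed_vector"
  assumes "x \<noteq> 0" "\<And>t. y \<noteq> t *\<^sub>R x" "a *\<^sub>R x + b *\<^sub>R y = 0"
  shows "a = 0 \<and> b = 0"
proof (cases "b = 0")
  case True
  then show ?thesis using assms(1,3) by simp
next
  case False
  have "b *\<^sub>R y = - (a *\<^sub>R x)" using assms(3) add_eq_0_iff by blast
  then have "(1 / b) *\<^sub>R (b *\<^sub>R y) = (1 / b) *\<^sub>R - (a *\<^sub>R x)" by simp
  then have "y = (- a / b) *\<^sub>R x" using False by simp
  then show ?thesis using assms(2) by blast
qed

lemma parallelogram_law_if_equal_norm_le:
  fixes x y :: "'a::real_normed_vector"
  assumes le: "\<And>u v :: 'a. norm u = norm v \<Longrightarrow> (norm (u + v))\<^sup>2 + (norm (u - v))\<^sup>2 \<le> 2 * (norm u)\<^sup>2 + 2 * (norm v)\<^sup>2"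
  shows "(norm (x + y))\<^sup>2 + (norm (x - y))\<^sup>2 = 2 * (norm x)\<^sup>2 + 2 * (norm y)\<^sup>2"
proof (cases "x = 0 \<or> (\<exists>t. y = t *\<^sub>R x)")
  case True
  then show ?thesis using parallelogram_law_collinear[of x] by auto
next
  case False
  define N where "N z = (norm (fst z *\<^sub>R x + snd z *\<^sub>R y))\<^sup>2" for z :: "real \<times> real"
  interpret Day_plane N
  proof
    show "continuous_on UNIV N" unfolding N_def by (intro continuous_intros)
    show "N (t *\<^sub>R z) = t\<^sup>2 * N z" for t z
      unfolding N_def by (simp add: power_mult_distrib flip: scaleR_scaleR scaleR_right_distrib)
    show "0 < N z" if "z \<noteq> 0" for z
      using that False scaleR_add_scaleR_eq_0_imp[of x y "fst z" "snd z"]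
      unfolding N_def by (auto simp: prod_eq_iff)
    show "N (z + w) + N (z - w) \<le> 2 * N z + 2 * N w" if "N z = N w" for z w
    proof -
      define u where "u = fst z *\<^sub>R x + snd z *\<^sub>R y"
      define v where "v = fst w *\<^sub>R x + snd w *\<^sub>R y"
      have "fst (z + w) *\<^sub>R x + snd (z + w) *\<^sub>R y = u + v" "fst (z - w) *\<^sub>R x + snd (z - w) *\<^sub>R y = u - v"
        unfolding u_def v_def by (simp_all add: algebra_simps)
      moreover have "norm u = norm v" using that unfolding N_def u_def v_def by (simp add: power2_eq_iff_nonneg)
      ultimately show ?thesis using le unfolding N_def u_def [symmetric] v_def [symmetric] by simp
    qed
  qed
  show ?thesis using parallelogram[of "(1, 0)" "(0, 1)"] unfolding N_def by simp
qed

section \<open>The P-angle constant\<close>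

definition P_angle_cos :: "'a::real_normed_vector \<Rightarrow> 'a \<Rightarrow> real" where
  "P_angle_cos x y = (norm (x + y)^2 + norm (x - y)^2 - 4) / (2 * norm (x + y) * norm (x - y))"

lemma P_angle_constant_eq_Sup:
  "P_angle_constant (X :: 'a::real_normed_vector itself)
    = Sup {P_angle_cos x y | x y :: 'a. norm x = 1 \<and> norm y = 1 \<and> x \<noteq> y \<and> x \<noteq> - y}"
  unfolding P_angle_constant_def P_angle_cos_def ..

lemma P_angle_cos_le_1:
  assumes "norm y = 1" "x \<noteq> y" "x \<noteq> - y"
  shows "P_angle_cos x y \<le> 1"
proof -
  have "\<bar>norm (x + y) - norm (x - y)\<bar> \<le> norm ((x + y) - (x - y))" by (rule norm_triangle_ineq3)
  also have "(x + y) - (x - y) = 2 *\<^sub>R y" by (simp flip: scaleR_2)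
  finally have "(norm (x + y) - norm (x - y))\<^sup>2 \<le> 2\<^sup>2"
    using assms(1) by (metis abs_le_square_iff abs_numeral norm_scaleR real_norm_def mult.right_neutral)
  then have "norm (x + y)^2 + norm (x - y)^2 - 4 \<le> 2 * norm (x + y) * norm (x - y)"
    by (simp add: power2_eq_square algebra_simps)
  moreover have "0 < norm (x + y)" "0 < norm (x - y)"
    using assms(2,3) by (simp_all add: add_eq_0_iff2)
  ultimately show ?thesis unfolding P_angle_cos_def by (simp add: divide_le_eq_1)
qed

lemma P_angle_cos_nonpos_iff:
  assumes "x \<noteq> y" "x \<noteq> - y"
  shows "P_angle_cos x y \<le> 0 \<longleftrightarrow> (norm (x + y))\<^sup>2 + (norm (x - y))\<^sup>2 \<le> 4"
proof -
  have "0 < 2 * norm (x + y) * norm (x - y)"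
    using assms by (simp add: add_eq_0_iff2)
  then show ?thesis unfolding P_angle_cos_def by (simp add: divide_le_0_iff)
qed

lemma unit_parallelogram_le_if_P_angle_constant_nonpos:
  fixes X :: "'a::real_normed_vector itself" and x y :: 'a
  assumes "P_angle_constant X \<le> 0" "norm x = 1" "norm y = 1"
  shows "(norm (x + y))\<^sup>2 + (norm (x - y))\<^sup>2 \<le> 4"
proof (cases "y = x \<or> y = - x")
  case True
  then consider "y = x" | "y = - x" by blast
  then show ?thesis using assms(2) by cases (simp_all flip: scaleR_2)
next
  case False
  then have "x \<noteq> y" "x \<noteq> - y" by auto
  let ?S = "{P_angle_cos x y | x y :: 'a. norm x = 1 \<and> norm y = 1 \<and> x \<noteq> y \<and> x \<noteq> - y}"
  have "bdd_above ?S"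
  proof (rule bdd_aboveI)
    fix v assume "v \<in> ?S"
    then show "v \<le> 1" using P_angle_cos_le_1 by blast
  qed
  moreover have "P_angle_cos x y \<in> ?S" using assms(2,3) \<open>x \<noteq> y\<close> \<open>x \<noteq> - y\<close> by blast
  ultimately have "P_angle_cos x y \<le> Sup ?S" by (rule cSup_upper[rotated])
  then have "P_angle_cos x y \<le> 0" using assms(1) unfolding P_angle_constant_eq_Sup by simp
  then show ?thesis using P_angle_cos_nonpos_iff[OF \<open>x \<noteq> y\<close> \<open>x \<noteq> - y\<close>] by simp
qed

lemma P_angle_constant_eq_0_if_parallelogram:
  fixes X :: "'a::real_normed_vector itself" and x0 y0 :: 'a
  assumes "norm x0 = 1" "norm y0 = 1" "x0 \<noteq> y0" "x0 \<noteq> - y0"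
    and par: "\<And>x y :: 'a. (norm (x + y))\<^sup>2 + (norm (x - y))\<^sup>2 = 2 * (norm x)\<^sup>2 + 2 * (norm y)\<^sup>2"
  shows "P_angle_constant X = 0"
proof -
  have zero: "P_angle_cos x y = 0" if "norm x = 1" "norm y = 1" for x y :: 'a
    using that unfolding P_angle_cos_def par by simp
  have "{P_angle_cos x y | x y :: 'a. norm x = 1 \<and> norm y = 1 \<and> x \<noteq> y \<and> x \<noteq> - y} = {0}"
  proof
    show "{0} \<subseteq> {P_angle_cos x y | x y :: 'a. norm x = 1 \<and> norm y = 1 \<and> x \<noteq> y \<and> x \<noteq> - y}"
      using assms(1-4) zero[OF assms(1,2)] by force
  qed (use zero in auto)
  then show ?thesis unfolding P_angle_constant_eq_Sup by simp
qed

lemma unit_pair_if_independent_card_2: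
  fixes B :: "'a::real_normed_vector set"
  assumes "independent B" "card B = 2"
  obtains x y :: 'a where "norm x = 1" "norm y = 1" "x \<noteq> y" "x \<noteq> - y"
proof -
  obtain b1 b2 where B: "B = {b1, b2}" "b1 \<noteq> b2" using assms(2) by (meson card_2_iff)
  have "b1 \<notin> span {b2}" using assms(1) B by (simp add: independent_insert)
  have "b1 \<noteq> 0" "b2 \<noteq> 0" using assms(1) B(1) dependent_zero by blast+
  moreover have "b1 \<in> span {b2}" if "sgn b1 = s *\<^sub>R sgn b2" for s
  proof -
    have "b1 = norm b1 *\<^sub>R sgn b1" using \<open>b1 \<noteq> 0\<close> by (simp add: sgn_div_norm)
    also have "\<dots> = (norm b1 * s / norm b2) *\<^sub>R b2" unfolding that by (simp add: sgn_div_norm divide_inverse ac_simps)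
    finally show ?thesis by (metis span_base span_scale singletonI)
  qed
  then have "sgn b1 \<noteq> sgn b2" "sgn b1 \<noteq> - sgn b2"
    using \<open>b1 \<notin> span {b2}\<close> by (metis scaleR_one, metis scaleR_minus1_left)
  then show ?thesis using that[of "sgn b1" "sgn b2"] \<open>b1 \<noteq> 0\<close> \<open>b2 \<noteq> 0\<close> by (simp add: norm_sgn)
qed

theorem theorem3p5:
  fixes X :: "'a::banach itself"
  assumes dim2: "\<exists>B :: 'a set. independent B \<and> card B = 2"
  shows "norm_from_inner_product X \<longleftrightarrow> P_angle_constant X = 0"
proof
  assume "norm_from_inner_product X"
  moreover obtain x0 y0 :: 'a where "norm x0 = 1" "norm y0 = 1" "x0 \<noteq> y0" "x0 \<noteq> - y0"
    using dim2 unit_pair_if_independent_card_2 by blast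
  ultimately show "P_angle_constant X = 0"
    using P_angle_constant_eq_0_if_parallelogram parallelogram_law_if_norm_from_inner_product by blast
next
  assume "P_angle_constant X = 0"
  then have "(norm (x + y))\<^sup>2 + (norm (x - y))\<^sup>2 \<le> 4" if "norm x = 1" "norm y = 1" for x y :: 'a
    using unit_parallelogram_le_if_P_angle_constant_nonpos[of X] that by simp
  then have "(norm (x + y))\<^sup>2 + (norm (x - y))\<^sup>2 = 2 * (norm x)\<^sup>2 + 2 * (norm y)\<^sup>2" for x y :: 'a
    by (intro parallelogram_law_if_equal_norm_le equal_norm_parallelogram_le_if_unit)
  then show "norm_from_inner_product X" by (rule norm_from_inner_product_if_parallelogram)
qed

end
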